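(* Let $V$ be a finite-dimensional irreducible $T$-module. Then (i) there exist nonnegative integers $r,\delta$ with $r+\delta\le d$ such that for $0\le i\le d$, $e^*_iV\ne0$ if and only if $r\le i\le r+\delta$; (ii) there exist nonnegative integers $t,\delta^*$ with $t+\delta^*\le d$ such that for $0\le i\le d$, $e_iV\ne0$ if and only if $t\le i\le t+\delta^*$.
   Context: $\mathbb{F}$ is a field, $d\ge0$, and $\{\theta_i\}_{i=0}^d$, $\{\theta^*_i\}_{i=0}^d$ are scalars in $\mathbb{F}$ with $\theta_i\ne\theta_j$, $\theta^*_i\ne\theta^*_j$ for $i\ne j$, such that $\frac{\theta_{i-2}-\theta_{i+1}}{\theta_{i-1}-\theta_i}$ and $\frac{\theta^*_{i-2}-\theta^*_{i+1}}{\theta^*_{i-1}-\theta^*_i}$ are equal and independent of $i$ for $2\le i\le d-1$. $T$ is the associative $\mathbb{F}$-algebra with $1$ generated by $a,e_0,\dots,e_d,a^*,e^*_0,\dots,e^*_d$ with relations $e_ie_j=\delta_{ij}e_i$, $e^*_ie^*_j=\delta_{ij}e^*_i$, $\sum_ie_i=\sum_ie^*_i=1$, $a=\sum_i\theta_ie_i$, $a^*=\sum_i\theta^*_ie^*_i$, and $e^*_ia^ke^*_j=0$, $e_i{a^*}^ke_j=0$ whenever $0\le i,j,k\le d$ and $k<|i-j|$. *)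

theory Defs
  imports Complex_Main
begin

definition TD_eigen_params :: "nat \<Rightarrow> (nat \<Rightarrow> 'a::field) \<Rightarrow> (nat \<Rightarrow> 'a) \<Rightarrow> bool" where
  "TD_eigen_params d th ths \<longleftrightarrow>
     (\<forall>i\<le>d. \<forall>j\<le>d. i \<noteq> j \<longrightarrow> th i \<noteq> th j) \<and>
     (\<forall>i\<le>d. \<forall>j\<le>d. i \<noteq> j \<longrightarrow> ths i \<noteq> ths j) \<and>
     (\<exists>\<beta>. \<forall>i. 2 \<le> i \<and> i + 1 \<le> d \<longrightarrow>
        (th (i-2) - th (i+1)) / (th (i-1) - th i) = \<beta> \<and>
        (ths (i-2) - ths (i+1)) / (ths (i-1) - ths i) = \<beta>)"

text \<open>A (unital) T-module: an F-vector space V (the type 'v with scalar multiplication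
  scale) together with linear operators A, E i, As, Es i (the actions of a, e_i, a*, e*_i,
  for 0 <= i <= d) satisfying the defining relations of T.\<close>
definition T_module ::
  "('a::field \<Rightarrow> 'v::ab_group_add \<Rightarrow> 'v) \<Rightarrow> nat \<Rightarrow> (nat \<Rightarrow> 'a) \<Rightarrow> (nat \<Rightarrow> 'a) \<Rightarrow>
   ('v \<Rightarrow> 'v) \<Rightarrow> (nat \<Rightarrow> 'v \<Rightarrow> 'v) \<Rightarrow> ('v \<Rightarrow> 'v) \<Rightarrow> (nat \<Rightarrow> 'v \<Rightarrow> 'v) \<Rightarrow> bool" where
  "T_module scale d th ths A E As Es \<longleftrightarrow>
     vector_space scale \<and>
     Vector_Spaces.linear scale scale A \<and> Vector_Spaces.linear scale scale As \<and>
     (\<forall>i\<le>d. Vector_Spaces.linear scale scale (E i) \<and> Vector_Spaces.linear scale scale (Es i)) \<and>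
     (\<forall>i\<le>d. \<forall>j\<le>d. E i \<circ> E j = (if i = j then E i else (\<lambda>_. 0))) \<and>
     (\<forall>i\<le>d. \<forall>j\<le>d. Es i \<circ> Es j = (if i = j then Es i else (\<lambda>_. 0))) \<and>
     (\<forall>v. (\<Sum>i\<le>d. E i v) = v) \<and>
     (\<forall>v. (\<Sum>i\<le>d. Es i v) = v) \<and>
     (\<forall>v. A v = (\<Sum>i\<le>d. scale (th i) (E i v))) \<and>
     (\<forall>v. As v = (\<Sum>i\<le>d. scale (ths i) (Es i v))) \<and>
     (\<forall>i\<le>d. \<forall>j\<le>d. \<forall>k\<le>d. int k < \<bar>int i - int j\<bar> \<longrightarrow>
        Es i \<circ> (A ^^ k) \<circ> Es j = (\<lambda>_. 0) \<and> E i \<circ> (As ^^ k) \<circ> E j = (\<lambda>_. 0))"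

definition finite_dim_space :: "('a::field \<Rightarrow> 'v::ab_group_add \<Rightarrow> 'v) \<Rightarrow> bool" where
  "finite_dim_space scale \<longleftrightarrow> (\<exists>B. finite B \<and> module.span scale B = UNIV)"

text \<open>Irreducible: V nonzero and the only T-submodules are 0 and V.
  A subspace is a T-submodule iff it is invariant under all the generators.\<close>
definition T_irreducible ::
  "('a::field \<Rightarrow> 'v::ab_group_add \<Rightarrow> 'v) \<Rightarrow> nat \<Rightarrow>
   ('v \<Rightarrow> 'v) \<Rightarrow> (nat \<Rightarrow> 'v \<Rightarrow> 'v) \<Rightarrow> ('v \<Rightarrow> 'v) \<Rightarrow> (nat \<Rightarrow> 'v \<Rightarrow> 'v) \<Rightarrow> bool" where
  "T_irreducible scale d A E As Es \<longleftrightarrow>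
     (\<exists>v::'v. v \<noteq> 0) \<and>
     (\<forall>W. module.subspace scale W \<and> A ` W \<subseteq> W \<and> As ` W \<subseteq> W \<and>
          (\<forall>i\<le>d. E i ` W \<subseteq> W \<and> Es i ` W \<subseteq> W)
          \<longrightarrow> W = {0} \<or> W = UNIV)"

end

theory Submission
  imports Defs
begin

text \<open>
  Let \<open>S\<close> be the set of \<open>i\<close> with \<open>e\<^sup>*\<^sub>i V \<noteq> 0\<close>, let \<open>r = min S\<close> and let
  \<open>[r, r + \<delta>]\<close> be the longest run of consecutive elements of \<open>S\<close> starting at \<open>r\<close>.
  Then \<open>W = \<Sum>\<^sub>r\<^sub>\<le>\<^sub>i\<^sub>\<le>\<^sub>r\<^sub>+\<^sub>\<delta> e\<^sup>*\<^sub>i V\<close> is a nonzero \<open>T\<close>-submodule: it is clearly stable under the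
  \<open>e\<^sup>*\<^sub>j\<close> and \<open>a\<^sup>*\<close>; it is stable under \<open>a\<close> because \<open>a\<close> moves \<open>e\<^sup>*\<^sub>j V\<close> only into
  \<open>e\<^sup>*\<^sub>j\<^sub>-\<^sub>1 V + e\<^sup>*\<^sub>j V + e\<^sup>*\<^sub>j\<^sub>+\<^sub>1 V\<close> and \<open>e\<^sup>*\<^sub>r\<^sub>-\<^sub>1 V = e\<^sup>*\<^sub>r\<^sub>+\<^sub>\<delta>\<^sub>+\<^sub>1 V = 0\<close>; and it is stable under
  each \<open>e\<^sub>j\<close>, a polynomial in \<open>a\<close> since the \<open>\<theta>\<^sub>i\<close> are distinct. By irreducibility
  \<open>W = V\<close>, so \<open>S = [r, r + \<delta>]\<close>. Part (ii) is part (i) with the roles of \<open>a\<close> and \<open>a\<^sup>*\<close>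
  exchanged.
\<close>

lemma maximal_initial_run:
  fixes S :: "nat set"
  assumes "finite S" "S \<noteq> {}"
  obtains r \<delta> where "{r..r + \<delta>} \<subseteq> S" "\<forall>i\<in>S. r \<le> i" "r + \<delta> + 1 \<notin> S"
proof -
  define r where "r = Min S"
  define run where "run \<delta> \<longleftrightarrow> {r..r + \<delta>} \<subseteq> S" for \<delta>
  have bounded: "\<delta> \<le> Max S" if "run \<delta>" for \<delta>
  proof -
    have "r + \<delta> \<in> S" using that by (auto simp: run_def)
    then show ?thesis using Max_ge[OF assms(1)] by fastforce
  qed
  define \<delta> where "\<delta> = (GREATEST \<delta>. run \<delta>)"
  have "run 0"
    using assms by (simp add: run_def r_def)
  then have run: "run \<delta>"
    unfolding \<delta>_def using bounded by (rule GreatestI_nat)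
  have "r + \<delta> + 1 \<notin> S"
  proof
    assume "r + \<delta> + 1 \<in> S"
    with run have "run (\<delta> + 1)"
      by (auto simp: run_def le_Suc_eq)
    then have "\<delta> + 1 \<le> \<delta>"
      unfolding \<delta>_def using bounded by (rule Greatest_le_nat)
    then show False by simp
  qed
  moreover have "\<forall>i\<in>S. r \<le> i"
    using assms by (simp add: r_def)
  ultimately show ?thesis
    using run that by (simp add: run_def)
qed

locale eigen_decomposition = vector_space scale
  for scale :: "'a::field \<Rightarrow> 'v::ab_group_add \<Rightarrow> 'v" +
  fixes d :: nat and P :: "nat \<Rightarrow> 'v \<Rightarrow> 'v" and c :: "nat \<Rightarrow> 'a" and M :: "'v \<Rightarrow> 'v"
  assumes linear_M: "Vector_Spaces.linear scale scale M"
    and linear_P: "i \<le> d \<Longrightarrow> Vector_Spaces.linear scale scale (P i)"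
    and P_P: "i \<le> d \<Longrightarrow> j \<le> d \<Longrightarrow> P i (P j v) = (if i = j then P j v else 0)"
    and sum_P: "(\<Sum>i\<le>d. P i v) = v"
    and M_eq: "M v = (\<Sum>i\<le>d. scale (c i) (P i v))"
begin

lemma M_hom: "module_hom scale scale M"
  using linear_M by (simp add: linear_iff_module_hom)

lemma P_hom: "i \<le> d \<Longrightarrow> module_hom scale scale (P i)"
  using linear_P by (simp add: linear_iff_module_hom)

lemma P_scaled_sum:
  "i \<le> d \<Longrightarrow> P i (\<Sum>l\<le>d. scale (f l) (P l v)) = scale (f i) (P i v)"
  by (simp add: module_hom.sum[OF P_hom] module_hom.scale[OF P_hom] P_P if_distrib cong: if_cong)

lemma M_P: "i \<le> d \<Longrightarrow> M (P i v) = scale (c i) (P i v)"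
  by (simp add: M_eq P_P if_distrib cong: if_cong)

lemma P_M: "i \<le> d \<Longrightarrow> P i (M v) = scale (c i) (P i v)"
  by (simp add: M_eq P_scaled_sum)

text \<open>The subspace \<open>\<Sum>\<^sub>i\<^sub>\<in>\<^sub>I P i V\<close>.\<close>
definition eigenspace_sum :: "nat set \<Rightarrow> 'v set" where
  "eigenspace_sum I = {v. \<forall>i\<le>d. P i v \<noteq> 0 \<longrightarrow> i \<in> I}"

lemma subspace_eigenspace_sum: "subspace (eigenspace_sum I)"
  unfolding subspace_def eigenspace_sum_def
  by (auto simp: module_hom.add[OF P_hom] module_hom.scale[OF P_hom] module_hom.zero[OF P_hom])

lemma P_in_eigenspace_sum:
  assumes "i \<in> I" "i \<le> d"
  shows "P i v \<in> eigenspace_sum I"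
  using assms by (auto simp: eigenspace_sum_def P_P)

lemma P_maps_eigenspace_sum:
  assumes "j \<le> d" "v \<in> eigenspace_sum I"
  shows "P j v \<in> eigenspace_sum I"
proof (cases "j \<in> I")
  case True
  then show ?thesis using assms(1) by (rule P_in_eigenspace_sum)
next
  case False
  then have "P j v = 0" using assms by (auto simp: eigenspace_sum_def)
  then show ?thesis using subspace_eigenspace_sum by (simp add: subspace_0)
qed

lemma M_maps_eigenspace_sum: "v \<in> eigenspace_sum I \<Longrightarrow> M v \<in> eigenspace_sum I"
  by (auto simp: eigenspace_sum_def P_M)

text \<open>The vector below is \<open>(\<Prod>\<^sub>k\<^sub>\<in>\<^sub>k\<^sub>s (M - c k)) v\<close>.\<close>
lemma product_shift_in_invariant_subspace:
  assumes W: "subspace W" "M ` W \<subseteq> W" and v: "v \<in> W"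
  shows "(\<Sum>i\<le>d. scale (\<Prod>k\<leftarrow>ks. c i - c k) (P i v)) \<in> W"
proof (induction ks)
  case Nil
  then show ?case using v by (simp add: sum_P)
next
  case (Cons k ks)
  define u where "u = (\<Sum>i\<le>d. scale (\<Prod>k\<leftarrow>ks. c i - c k) (P i v))"
  have "M u - scale (c k) u
      = (\<Sum>i\<le>d. scale ((\<Prod>k\<leftarrow>ks. c i - c k) * c i) (P i v) - scale (c k * (\<Prod>k\<leftarrow>ks. c i - c k)) (P i v))"
    by (simp add: u_def module_hom.sum[OF M_hom] module_hom.scale[OF M_hom] M_P
        scale_sum_right sum_subtractf)
  also have "\<dots> = (\<Sum>i\<le>d. scale (\<Prod>k\<leftarrow>k # ks. c i - c k) (P i v))"
    by (simp add: scale_left_diff_distrib[symmetric] left_diff_distrib mult.commute)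
  finally have "M u - scale (c k) u = (\<Sum>i\<le>d. scale (\<Prod>k\<leftarrow>k # ks. c i - c k) (P i v))" .
  moreover have "M u - scale (c k) u \<in> W"
    using Cons W unfolding u_def by (auto intro: subspace_diff subspace_scale)
  ultimately show ?case by simp
qed

text \<open>Up to the nonzero factor \<open>\<Prod>\<^sub>k\<^sub>\<noteq>\<^sub>j (c j - c k)\<close>, \<open>P j\<close> is the polynomial \<open>\<Prod>\<^sub>k\<^sub>\<noteq>\<^sub>j (M - c k)\<close> in \<open>M\<close>.\<close>
lemma P_maps_invariant_subspace:
  assumes inj: "inj_on c {..d}" and W: "subspace W" "M ` W \<subseteq> W"
    and j: "j \<le> d" and v: "v \<in> W"
  shows "P j v \<in> W"
proof -
  define ks where "ks = filter (\<lambda>k. k \<noteq> j) [0..<Suc d]"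
  define p where "p i = (\<Prod>k\<leftarrow>ks. c i - c k)" for i
  have ks: "set ks = {..d} - {j}" by (auto simp: ks_def)
  have p_zero: "p i = 0 \<longleftrightarrow> i \<noteq> j" if "i \<le> d" for i
  proof -
    have "p i = 0 \<longleftrightarrow> (\<exists>k\<in>{..d} - {j}. c i = c k)"
      by (auto simp: p_def prod_list_zero_iff ks)
    also have "\<dots> \<longleftrightarrow> i \<noteq> j"
      using that j inj by (auto simp: inj_on_eq_iff)
    finally show ?thesis .
  qed
  have "(\<Sum>i\<le>d. scale (p i) (P i v)) = (\<Sum>i\<le>d. if i = j then scale (p j) (P j v) else 0)"
    by (rule sum.cong) (auto simp: p_zero)
  then have "(\<Sum>i\<le>d. scale (p i) (P i v)) = scale (p j) (P j v)"
    using j by simp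
  then have "scale (p j) (P j v) \<in> W"
    using product_shift_in_invariant_subspace[OF W v, of ks] by (simp add: p_def)
  then have "scale (inverse (p j)) (scale (p j) (P j v)) \<in> W"
    by (rule subspace_scale[OF W(1)])
  then show ?thesis
    using p_zero[OF j] by simp
qed

end

locale tridiagonal_action =
  E: eigen_decomposition scale d E th A + Es: eigen_decomposition scale d Es ths As
  for scale :: "'a::field \<Rightarrow> 'v::ab_group_add \<Rightarrow> 'v" and d E th A Es ths As +
  assumes inj_th: "inj_on th {..d}"
    and Es_A_Es: "i \<le> d \<Longrightarrow> j \<le> d \<Longrightarrow> 1 < \<bar>int i - int j\<bar> \<Longrightarrow> Es i (A (Es j v)) = 0"
begin

definition neighbours_vanish :: "nat set \<Rightarrow> bool" where
  "neighbours_vanish I \<longleftrightarrow>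
     (\<forall>i\<le>d. \<forall>j\<in>I. i \<notin> I \<and> \<bar>int i - int j\<bar> \<le> 1 \<longrightarrow> (\<forall>w. Es i w = 0))"

lemma A_maps_eigenspace_sum:
  assumes closed: "neighbours_vanish I"
    and v: "v \<in> Es.eigenspace_sum I"
  shows "A v \<in> Es.eigenspace_sum I"
  unfolding Es.eigenspace_sum_def
proof (intro CollectI allI impI)
  fix i assume i: "i \<le> d" and nonzero: "Es i (A v) \<noteq> 0"
  show "i \<in> I"
  proof (rule ccontr)
    assume "i \<notin> I"
    have term_zero: "Es i (A (Es j v)) = 0" if j: "j \<le> d" for j
    proof (cases "Es j v = 0")
      case True
      then show ?thesis
        using i by (simp add: module_hom.zero[OF E.M_hom] module_hom.zero[OF Es.P_hom])
    next
      case False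
      then have "j \<in> I" using v j by (auto simp: Es.eigenspace_sum_def)
      then show ?thesis
        using closed i j \<open>i \<notin> I\<close> Es_A_Es[OF i j] unfolding neighbours_vanish_def
        by (metis not_less)
    qed
    have "Es i (A v) = Es i (A (\<Sum>j\<le>d. Es j v))"
      by (simp only: Es.sum_P)
    also have "\<dots> = (\<Sum>j\<le>d. Es i (A (Es j v)))"
      using i by (simp add: module_hom.sum[OF E.M_hom] module_hom.sum[OF Es.P_hom])
    also have "\<dots> = 0"
      by (simp add: term_zero)
    finally show False using nonzero by contradiction
  qed
qed

lemma eigenspace_sum_eq_UNIV:
  assumes irr: "T_irreducible scale d A E As Es"
    and closed: "neighbours_vanish I"
    and r: "r \<in> I" "r \<le> d" "Es r w \<noteq> 0"
  shows "Es.eigenspace_sum I = UNIV"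
proof -
  let ?W = "Es.eigenspace_sum I"
  have sub: "module.subspace scale ?W"
    by (rule Es.subspace_eigenspace_sum)
  have A_W: "A ` ?W \<subseteq> ?W"
    using A_maps_eigenspace_sum[OF closed] by (rule image_subsetI)
  have As_W: "As ` ?W \<subseteq> ?W"
    using Es.M_maps_eigenspace_sum by (rule image_subsetI)
  have projections_W: "\<forall>i\<le>d. E i ` ?W \<subseteq> ?W \<and> Es i ` ?W \<subseteq> ?W"
    using E.P_maps_invariant_subspace[OF inj_th sub A_W] Es.P_maps_eigenspace_sum
    by (simp add: image_subsetI)
  have "?W = {0} \<or> ?W = UNIV"
    using irr sub A_W As_W projections_W unfolding T_irreducible_def by simp
  moreover have "Es r w \<in> ?W"
    using r(1,2) by (rule Es.P_in_eigenspace_sum)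
  ultimately show ?thesis
    using r(3) by blast
qed

lemma support_interval:
  assumes irr: "T_irreducible scale d A E As Es"
  shows "\<exists>r \<delta>. r + \<delta> \<le> d \<and> (\<forall>i\<le>d. (\<exists>v. Es i v \<noteq> 0) \<longleftrightarrow> r \<le> i \<and> i \<le> r + \<delta>)"
proof -
  define S where "S = {i. i \<le> d \<and> (\<exists>v. Es i v \<noteq> 0)}"
  have "finite S" by (simp add: S_def)
  moreover have "S \<noteq> {}"
  proof
    assume "S = {}"
    obtain v :: 'v where "v \<noteq> 0" using irr by (auto simp: T_irreducible_def)
    moreover have "(\<Sum>i\<le>d. Es i v) = 0" using \<open>S = {}\<close> by (auto simp: S_def)
    ultimately show False by (simp add: Es.sum_P)
  qed
  ultimately obtain r \<delta> where run: "{r..r + \<delta>} \<subseteq> S" and min: "\<forall>i\<in>S. r \<le> i"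
    and max: "r + \<delta> + 1 \<notin> S"
    by (rule maximal_initial_run)
  then have "r \<in> S" "r + \<delta> \<in> S" by auto
  have closed: "neighbours_vanish {r..r + \<delta>}"
    unfolding neighbours_vanish_def
  proof (intro allI impI ballI)
    fix i j w
    assume "i \<le> d" "j \<in> {r..r + \<delta>}" "i \<notin> {r..r + \<delta>} \<and> \<bar>int i - int j\<bar> \<le> 1"
    then have "i < r \<or> i = r + \<delta> + 1" by (simp add: not_le) linarith
    then have "i \<notin> S" using min max by auto
    then show "Es i w = 0" using \<open>i \<le> d\<close> by (auto simp: S_def)
  qed
  obtain w where "Es r w \<noteq> 0" using \<open>r \<in> S\<close> by (auto simp: S_def)
  then have UNIV: "Es.eigenspace_sum {r..r + \<delta>} = UNIV"
    using \<open>r \<in> S\<close> by (intro eigenspace_sum_eq_UNIV[OF irr closed]) (auto simp: S_def)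
  show ?thesis
  proof (intro exI conjI allI impI)
    show "r + \<delta> \<le> d" using \<open>r + \<delta> \<in> S\<close> by (simp add: S_def)
    fix i assume "i \<le> d"
    then show "(\<exists>v. Es i v \<noteq> 0) \<longleftrightarrow> r \<le> i \<and> i \<le> r + \<delta>"
      using UNIV run by (auto simp: Es.eigenspace_sum_def S_def)
  qed
qed

end

lemma T_module_swap:
  "T_module scale d th ths A E As Es \<Longrightarrow> T_module scale d ths th As Es A E"
  unfolding T_module_def by blast

lemma T_irreducible_swap:
  "T_irreducible scale d A E As Es \<Longrightarrow> T_irreducible scale d As Es A E"
  unfolding T_irreducible_def by blast

lemma TD_eigen_params_inj:
  "TD_eigen_params d th ths \<Longrightarrow> inj_on th {..d} \<and> inj_on ths {..d}"
  unfolding TD_eigen_params_def inj_on_def by blast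

lemma T_module_eigen_decomposition:
  fixes scale :: "'a::field \<Rightarrow> 'v::ab_group_add \<Rightarrow> 'v"
  assumes "T_module scale d th ths A E As Es"
  shows "eigen_decomposition scale d E th A"
proof -
  have orthogonal: "\<forall>i\<le>d. \<forall>j\<le>d. E i \<circ> E j = (if i = j then E i else (\<lambda>_. 0))"
    using assms by (simp add: T_module_def)
  show ?thesis
  proof (intro eigen_decomposition.intro eigen_decomposition_axioms.intro)
    show "E i (E j v) = (if i = j then E j v else 0)" if "i \<le> d" "j \<le> d" for i j v
      using fun_cong[OF orthogonal[rule_format, OF that], of v] by auto
  qed (use assms in \<open>simp_all add: T_module_def\<close>)
qed

lemma T_module_tridiagonal_action:
  fixes scale :: "'a::field \<Rightarrow> 'v::ab_group_add \<Rightarrow> 'v"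
  assumes M: "T_module scale d th ths A E As Es" and inj: "inj_on th {..d}"
  shows "tridiagonal_action scale d E th A Es ths As"
proof (intro tridiagonal_action.intro tridiagonal_action_axioms.intro)
  show "eigen_decomposition scale d E th A"
    using M by (rule T_module_eigen_decomposition)
  show "eigen_decomposition scale d Es ths As"
    using T_module_swap[OF M] by (rule T_module_eigen_decomposition)
  show "Es i (A (Es j v)) = 0" if "i \<le> d" "j \<le> d" "1 < \<bar>int i - int j\<bar>" for i j v
  proof -
    have "\<forall>k\<le>d. int k < \<bar>int i - int j\<bar> \<longrightarrow> Es i \<circ> (A ^^ k) \<circ> Es j = (\<lambda>_. 0)"
      using M that(1,2) unfolding T_module_def by blast
    moreover have "1 \<le> d" using that by linarith
    ultimately have "Es i \<circ> A \<circ> Es j = (\<lambda>_. 0)" using that(3) by auto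
    then show ?thesis by (metis comp_apply)
  qed
qed (fact inj)

theorem lemma5p3:
  fixes scale :: "'a::field \<Rightarrow> 'v::ab_group_add \<Rightarrow> 'v"
    and d :: nat and th ths :: "nat \<Rightarrow> 'a"
    and A As :: "'v \<Rightarrow> 'v" and E Es :: "nat \<Rightarrow> 'v \<Rightarrow> 'v"
  assumes "TD_eigen_params d th ths"
    and "T_module scale d th ths A E As Es"
    and "finite_dim_space scale"
    and "T_irreducible scale d A E As Es"
  shows "(\<exists>r \<delta>::nat. r + \<delta> \<le> d \<and>
            (\<forall>i\<le>d. (\<exists>v. Es i v \<noteq> 0) \<longleftrightarrow> r \<le> i \<and> i \<le> r + \<delta>)) \<and>
         (\<exists>t \<delta>s::nat. t + \<delta>s \<le> d \<and>
            (\<forall>i\<le>d. (\<exists>v. E i v \<noteq> 0) \<longleftrightarrow> t \<le> i \<and> i \<le> t + \<delta>s))"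
proof
  have inj: "inj_on th {..d}" "inj_on ths {..d}"
    using TD_eigen_params_inj[OF assms(1)] by auto
  show "\<exists>r \<delta>. r + \<delta> \<le> d \<and> (\<forall>i\<le>d. (\<exists>v. Es i v \<noteq> 0) \<longleftrightarrow> r \<le> i \<and> i \<le> r + \<delta>)"
    using T_module_tridiagonal_action[OF assms(2) inj(1)] assms(4)
    by (rule tridiagonal_action.support_interval)
  show "\<exists>t \<delta>s. t + \<delta>s \<le> d \<and> (\<forall>i\<le>d. (\<exists>v. E i v \<noteq> 0) \<longleftrightarrow> t \<le> i \<and> i \<le> t + \<delta>s)"
    using T_module_tridiagonal_action[OF T_module_swap[OF assms(2)] inj(2)]
      T_irreducible_swap[OF assms(4)]
    by (rule tridiagonal_action.support_interval)
qed

end
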